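(* Let $A$ be a Banach algebra. (a) If $A$ has no unit and has a two-sided approximate identity (not necessarily bounded), then there is a net $(y_\mu)_{\mu\in\Lambda_0}$ in $A$ such that $y_\mu x\to0$ and $xy_\mu\to 0$ for every $x\in A$, and $y_\mu\not\to 0$. (b) If $A$ has no left unit and has a left approximate identity, then there is a net $(y_\mu)$ in $A$ with $y_\mu x\to 0$ for every $x\in A$ and $y_\mu\not\to0$. (c) If $A$ has no right unit and has a right approximate identity, then there is a net $(y_\mu)$ in $A$ with $xy_\mu\to 0$ for every $x\in A$ and $y_\mu\not\to0$. *)

theory Defs
  imports "HOL-Analysis.Analysis"
begin

text \<open>Banach algebras are modelled by the type class
  real_normed_algebra + banach (associative, not necessarily commutative,
  not necessarily unital; submultiplicative complete norm).
  Nets are modelled, as is standard in Isabelle/HOL, by proper filters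
  on an index type: a net indexed by a directed set corresponds to its
  (proper) filter of tails, and convergence of the net is convergence
  along that filter.\<close>

definition identity_elem :: "'a::ring \<Rightarrow> bool" where
  "identity_elem u \<longleftrightarrow> (\<forall>x. u * x = x \<and> x * u = x)"

definition left_identity_elem :: "'a::ring \<Rightarrow> bool" where
  "left_identity_elem u \<longleftrightarrow> (\<forall>x. u * x = x)"

definition right_identity_elem :: "'a::ring \<Rightarrow> bool" where
  "right_identity_elem u \<longleftrightarrow> (\<forall>x. x * u = x)"

definition two_sided_approx_identity ::
    "'i filter \<Rightarrow> ('i \<Rightarrow> 'a::real_normed_algebra) \<Rightarrow> bool" where
  "two_sided_approx_identity F e \<longleftrightarrow> F \<noteq> bot \<and>
     (\<forall>x. ((\<lambda>i. e i * x) \<longlongrightarrow> x) F \<and> ((\<lambda>i. x * e i) \<longlongrightarrow> x) F)"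

definition left_approx_identity ::
    "'i filter \<Rightarrow> ('i \<Rightarrow> 'a::real_normed_algebra) \<Rightarrow> bool" where
  "left_approx_identity F e \<longleftrightarrow> F \<noteq> bot \<and>
     (\<forall>x. ((\<lambda>i. e i * x) \<longlongrightarrow> x) F)"

definition right_approx_identity ::
    "'i filter \<Rightarrow> ('i \<Rightarrow> 'a::real_normed_algebra) \<Rightarrow> bool" where
  "right_approx_identity F e \<longleftrightarrow> F \<noteq> bot \<and>
     (\<forall>x. ((\<lambda>i. x * e i) \<longlongrightarrow> x) F)"

end

theory Submission
  imports Defs
begin

text \<open>A limit of a left (right, two-sided) approximate identity would be a left (right, two-sided)
  identity. So in the absence of such an identity the net \<open>(e\<^sub>i)\<close> diverges and, the algebra
  being complete, is not Cauchy: the differences \<open>e\<^sub>i - e\<^sub>j\<close> do not tend to \<open>0\<close> along pairs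
  \<open>(i, j)\<close>. On the other hand \<open>(e\<^sub>i - e\<^sub>j) x = e\<^sub>i x - e\<^sub>j x \<rightarrow> x - x = 0\<close>, and similarly on the
  right, so the net of differences is the required one.\<close>

definition difference_filter :: "'i filter \<Rightarrow> ('i \<Rightarrow> 'a::ab_group_add) \<Rightarrow> 'a filter" where
  "difference_filter F e = filtermap (\<lambda>p. e (fst p) - e (snd p)) (F \<times>\<^sub>F F)"

lemma difference_filter_neq_bot:
  "F \<noteq> bot \<Longrightarrow> difference_filter F e \<noteq> bot"
  by (simp add: difference_filter_def prod_filter_eq_bot filtermap_bot_iff)

lemma tendsto_diff_prod_filter:
  fixes f :: "'i \<Rightarrow> 'a::topological_group_add"
  assumes "(f \<longlongrightarrow> x) F"
  shows "((\<lambda>p. f (fst p) - f (snd p)) \<longlongrightarrow> 0) (F \<times>\<^sub>F F)"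
proof -
  have "((\<lambda>p. f (fst p)) \<longlongrightarrow> x) (F \<times>\<^sub>F F)" "((\<lambda>p. f (snd p)) \<longlongrightarrow> x) (F \<times>\<^sub>F F)"
    using filterlim_compose[OF assms filterlim_fst] filterlim_compose[OF assms filterlim_snd]
    by auto
  from tendsto_diff[OF this] show ?thesis by simp
qed

lemma convergent_if_tendsto_diff_prod_filter:
  fixes e :: "'i \<Rightarrow> 'a::banach"
  assumes "((\<lambda>p. e (fst p) - e (snd p)) \<longlongrightarrow> 0) (F \<times>\<^sub>F F)"
  shows "\<exists>u. (e \<longlongrightarrow> u) F"
proof -
  have "cauchy_filter (filtermap e F)"
    unfolding cauchy_filter_metric_filtermap
  proof (intro allI impI)
    fix r :: real assume "r > 0"
    then have "eventually (\<lambda>p. dist (e (fst p) - e (snd p)) 0 < r) (F \<times>\<^sub>F F)"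
      using assms tendstoD by blast
    then obtain Q where "eventually Q F" "\<And>x y. Q x \<Longrightarrow> Q y \<Longrightarrow> dist (e x - e y) 0 < r"
      unfolding eventually_prod_same by force
    then show "\<exists>P. eventually P F \<and> (\<forall>x y. P x \<and> P y \<longrightarrow> dist (e x) (e y) < r)"
      by (auto simp: dist_norm)
  qed
  then obtain u where "filtermap e F \<le> nhds u"
    using cauchy_filter_convergent by (auto simp: convergent_filter_iff)
  then show ?thesis
    unfolding filterlim_def by blast
qed

lemma not_tendsto_zero_difference_filter:
  fixes e :: "'i \<Rightarrow> 'a::banach"
  assumes "\<nexists>u. (e \<longlongrightarrow> u) F"
  shows "\<not> ((\<lambda>\<mu>. \<mu>) \<longlongrightarrow> 0) (difference_filter F e)"
  using assms convergent_if_tendsto_diff_prod_filter[of e F]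
  unfolding difference_filter_def filterlim_filtermap o_def by blast

lemma tendsto_mult_right_zero_difference_filter:
  fixes e :: "'i \<Rightarrow> 'a::real_normed_algebra"
  assumes "((\<lambda>i. e i * x) \<longlongrightarrow> x) F"
  shows "((\<lambda>\<mu>. \<mu> * x) \<longlongrightarrow> 0) (difference_filter F e)"
  using tendsto_diff_prod_filter[OF assms]
  by (simp add: difference_filter_def filterlim_filtermap algebra_simps)

lemma tendsto_mult_left_zero_difference_filter:
  fixes e :: "'i \<Rightarrow> 'a::real_normed_algebra"
  assumes "((\<lambda>i. x * e i) \<longlongrightarrow> x) F"
  shows "((\<lambda>\<mu>. x * \<mu>) \<longlongrightarrow> 0) (difference_filter F e)"
  using tendsto_diff_prod_filter[OF assms]
  by (simp add: difference_filter_def filterlim_filtermap algebra_simps)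

lemma left_identity_elem_if_left_approx_identity_tendsto:
  assumes "left_approx_identity F e" "(e \<longlongrightarrow> u) F"
  shows "left_identity_elem u"
  using assms tendsto_unique[OF _ tendsto_mult[OF assms(2) tendsto_const]]
  unfolding left_approx_identity_def left_identity_elem_def by blast

lemma right_identity_elem_if_right_approx_identity_tendsto:
  assumes "right_approx_identity F e" "(e \<longlongrightarrow> u) F"
  shows "right_identity_elem u"
  using assms tendsto_unique[OF _ tendsto_mult[OF tendsto_const assms(2)]]
  unfolding right_approx_identity_def right_identity_elem_def by blast

lemma identity_elem_if_two_sided_approx_identity_tendsto:
  assumes "two_sided_approx_identity F e" "(e \<longlongrightarrow> u) F"
  shows "identity_elem u"
  using assms left_identity_elem_if_left_approx_identity_tendsto[of F e u]
    right_identity_elem_if_right_approx_identity_tendsto[of F e u]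
  unfolding two_sided_approx_identity_def left_approx_identity_def right_approx_identity_def
    identity_elem_def left_identity_elem_def right_identity_elem_def
  by blast

lemma two_sided_approx_identity_annihilating_net:
  fixes e :: "'i \<Rightarrow> 'a::{real_normed_algebra, banach}"
  assumes "\<nexists>u::'a. identity_elem u" "two_sided_approx_identity F e"
  shows "\<exists>(G::'a filter) (y::'a \<Rightarrow> 'a). G \<noteq> bot \<and>
           (\<forall>x. ((\<lambda>\<mu>. y \<mu> * x) \<longlongrightarrow> 0) G \<and> ((\<lambda>\<mu>. x * y \<mu>) \<longlongrightarrow> 0) G) \<and> \<not> (y \<longlongrightarrow> 0) G"
proof -
  have diverges: "\<nexists>u. (e \<longlongrightarrow> u) F"
    using assms(1) identity_elem_if_two_sided_approx_identity_tendsto[OF assms(2)] by blast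
  from assms(2) have F: "F \<noteq> bot" and e_mult: "\<And>x. ((\<lambda>i. e i * x) \<longlongrightarrow> x) F" "\<And>x. ((\<lambda>i. x * e i) \<longlongrightarrow> x) F"
    unfolding two_sided_approx_identity_def by auto
  show ?thesis
    by (intro exI[of _ "difference_filter F e"] exI[of _ "\<lambda>\<mu>::'a. \<mu>"])
      (simp add: F e_mult difference_filter_neq_bot not_tendsto_zero_difference_filter[OF diverges]
        tendsto_mult_right_zero_difference_filter tendsto_mult_left_zero_difference_filter)
qed

lemma left_approx_identity_annihilating_net:
  fixes e :: "'i \<Rightarrow> 'a::{real_normed_algebra, banach}"
  assumes "\<nexists>u::'a. left_identity_elem u" "left_approx_identity F e"
  shows "\<exists>(G::'a filter) (y::'a \<Rightarrow> 'a). G \<noteq> bot \<and>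
           (\<forall>x. ((\<lambda>\<mu>. y \<mu> * x) \<longlongrightarrow> 0) G) \<and> \<not> (y \<longlongrightarrow> 0) G"
proof -
  have diverges: "\<nexists>u. (e \<longlongrightarrow> u) F"
    using assms(1) left_identity_elem_if_left_approx_identity_tendsto[OF assms(2)] by blast
  from assms(2) have F: "F \<noteq> bot" and e_mult: "\<And>x. ((\<lambda>i. e i * x) \<longlongrightarrow> x) F"
    unfolding left_approx_identity_def by auto
  show ?thesis
    by (intro exI[of _ "difference_filter F e"] exI[of _ "\<lambda>\<mu>::'a. \<mu>"])
      (simp add: F e_mult difference_filter_neq_bot not_tendsto_zero_difference_filter[OF diverges]
        tendsto_mult_right_zero_difference_filter)
qed

lemma right_approx_identity_annihilating_net:
  fixes e :: "'i \<Rightarrow> 'a::{real_normed_algebra, banach}"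
  assumes "\<nexists>u::'a. right_identity_elem u" "right_approx_identity F e"
  shows "\<exists>(G::'a filter) (y::'a \<Rightarrow> 'a). G \<noteq> bot \<and>
           (\<forall>x. ((\<lambda>\<mu>. x * y \<mu>) \<longlongrightarrow> 0) G) \<and> \<not> (y \<longlongrightarrow> 0) G"
proof -
  have diverges: "\<nexists>u. (e \<longlongrightarrow> u) F"
    using assms(1) right_identity_elem_if_right_approx_identity_tendsto[OF assms(2)] by blast
  from assms(2) have F: "F \<noteq> bot" and e_mult: "\<And>x. ((\<lambda>i. x * e i) \<longlongrightarrow> x) F"
    unfolding right_approx_identity_def by auto
  show ?thesis
    by (intro exI[of _ "difference_filter F e"] exI[of _ "\<lambda>\<mu>::'a. \<mu>"])
      (simp add: F e_mult difference_filter_neq_bot not_tendsto_zero_difference_filter[OF diverges]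
        tendsto_mult_left_zero_difference_filter)
qed

theorem corollary1p3:
  fixes a0 :: "'a::{real_normed_algebra, banach}"
    and I0 :: "'i itself"
  shows
   "((\<not> (\<exists>u::'a. identity_elem u)) \<and>
       (\<exists>(F::'i filter) (e::'i \<Rightarrow> 'a). two_sided_approx_identity F e)
     \<longrightarrow> (\<exists>(G::'a filter) (y::'a \<Rightarrow> 'a). G \<noteq> bot \<and>
            (\<forall>x. ((\<lambda>\<mu>. y \<mu> * x) \<longlongrightarrow> 0) G \<and> ((\<lambda>\<mu>. x * y \<mu>) \<longlongrightarrow> 0) G) \<and>
            \<not> (y \<longlongrightarrow> 0) G))
    \<and>
    ((\<not> (\<exists>u::'a. left_identity_elem u)) \<and>
       (\<exists>(F::'i filter) (e::'i \<Rightarrow> 'a). left_approx_identity F e)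
     \<longrightarrow> (\<exists>(G::'a filter) (y::'a \<Rightarrow> 'a). G \<noteq> bot \<and>
            (\<forall>x. ((\<lambda>\<mu>. y \<mu> * x) \<longlongrightarrow> 0) G) \<and>
            \<not> (y \<longlongrightarrow> 0) G))
    \<and>
    ((\<not> (\<exists>u::'a. right_identity_elem u)) \<and>
       (\<exists>(F::'i filter) (e::'i \<Rightarrow> 'a). right_approx_identity F e)
     \<longrightarrow> (\<exists>(G::'a filter) (y::'a \<Rightarrow> 'a). G \<noteq> bot \<and>
            (\<forall>x. ((\<lambda>\<mu>. x * y \<mu>) \<longlongrightarrow> 0) G) \<and>
            \<not> (y \<longlongrightarrow> 0) G))"
  using two_sided_approx_identity_annihilating_net
    left_approx_identity_annihilating_net
    right_approx_identity_annihilating_net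
  by blast

end
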